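(* Fix $\alpha>0$, $y_0\in\mathrm{dom}\, h$. Let TAA be: $\lambda=2\alpha/(\alpha+\sqrt{\alpha^2+4L\alpha})$, $s_0=\nabla f(y_0)$, $\tilde x_0=y_0$, $x_0=\mathrm{argmin}_x\{\langle s_0,x\rangle+h^\alpha(x)\}$, and for $k\ge0$: $\tilde x_{k+1}=(1-\lambda)y_k+\lambda x_k$, $s_{k+1}=(1-\lambda)s_k+\lambda\nabla f(\tilde x_{k+1})$, $x_{k+1}=\mathrm{argmin}_x\{\langle s_{k+1},x\rangle+h^\alpha(x)\}$, $y_{k+1}=(1-\lambda)y_k+\lambda x_{k+1}$. Let GEM with $\nu^*=Lf^*$ be: $g_0=z_0=\nabla f(y_0)$, $v_{-1}=v_0=\nabla(h^\alpha)^*(-g_0)$, $\tau_0=\alpha/L$, $A_0=1$, $a_{-1}=0$, and for $k\ge0$: $a_k=\frac{\tau_k+\sqrt{\tau_k^2+4\tau_kA_k}}{2}$, $\tau_{k+1}=\tau_k+\alpha a_k/L$, $A_{k+1}=A_k+a_k$, $\hat v_k=v_k+\frac{a_{k-1}}{a_k}(v_k-v_{k-1})$, $g_{k+1}=\mathrm{argmin}_g\{a_k[\langle-\hat v_k,g\rangle+f^*(g)]+\frac{\tau_k}{\alpha}\operatorname{D}_{\nu^*}(g\|g_k)\}$, $z_{k+1}=\frac{A_k}{A_{k+1}}z_k+\frac{a_k}{A_{k+1}}g_{k+1}$, $v_{k+1}=\nabla(h^\alpha)^*(-z_{k+1})$, where $\operatorname{D}_{\nu^*}(g\|g_k)=L[f^*(g)-f^*(g_k)-\langle\tilde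 x_k,g-g_k\rangle]$ (using the subgradient $\tilde x_k\in\partial f^*(g_k)$). Then the two methods are equivalent with, for all $k\ge0$, $\nabla f(\tilde x_k)=g_k$, $s_k=z_k$, and $x_k=v_k$.
   Context: Let $\|\cdot\|$ be a norm on $\mathbb{R}^n$ with dual norm $\|\cdot\|_*$. Let $f:\mathbb{R}^n\to\mathbb{R}$ be convex, differentiable and $L$-smooth ($L>0$) with respect to $\|\cdot\|$, $h:\mathbb{R}^n\to(-\infty,\infty]$ closed proper convex with bounded domain, and $w:\mathbb{R}^n\to[0,+\infty]$ closed, $1$-strongly convex with respect to $\|\cdot\|$ on $\mathrm{dom}\, h$, with $\max_{\mathrm{dom}\, h}w<\infty$. Let $h^\alpha=h+\alpha w$; $^*$ denotes convex conjugate ($(h^\alpha)^*$ is differentiable). *)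

theory Defs
  imports "HOL-Analysis.Analysis"
begin

definition is_norm :: "('a::real_normed_vector \<Rightarrow> real) \<Rightarrow> bool" where
  "is_norm N \<longleftrightarrow> (\<forall>x. 0 \<le> N x) \<and> (\<forall>x. N x = 0 \<longleftrightarrow> x = 0)
     \<and> (\<forall>c x. N (c *\<^sub>R x) = \<bar>c\<bar> * N x) \<and> (\<forall>x y. N (x + y) \<le> N x + N y)"

definition dual_norm :: "('a::real_inner \<Rightarrow> real) \<Rightarrow> 'a \<Rightarrow> real" where
  "dual_norm N g = Sup {g \<bullet> x | x. N x \<le> 1}"

definition L_smooth :: "('a::real_inner \<Rightarrow> real) \<Rightarrow> real \<Rightarrow> ('a \<Rightarrow> real) \<Rightarrow> bool" where
  "L_smooth N L f \<longleftrightarrow> (\<forall>x y gx gy. GDERIV f x :> gx \<longrightarrow> GDERIV f y :> gy \<longrightarrow>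
      dual_norm N (gx - gy) \<le> L * N (x - y))"

definition edom :: "('a \<Rightarrow> ereal) \<Rightarrow> 'a set" where
  "edom h = {x. h x < \<infinity>}"

definition epigraph :: "('a \<Rightarrow> ereal) \<Rightarrow> ('a \<times> real) set" where
  "epigraph h = {(x, t). h x \<le> ereal t}"

definition closed_fun :: "('a::topological_space \<Rightarrow> ereal) \<Rightarrow> bool" where
  "closed_fun h \<longleftrightarrow> closed (epigraph h)"

definition proper_fun :: "('a \<Rightarrow> ereal) \<Rightarrow> bool" where
  "proper_fun h \<longleftrightarrow> (\<forall>x. h x > -\<infinity>) \<and> edom h \<noteq> {}"

definition convex_fun :: "('a::real_vector \<Rightarrow> ereal) \<Rightarrow> bool" where
  "convex_fun h \<longleftrightarrow> convex (epigraph h)"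

definition strongly_convex_on ::
  "('a::real_vector \<Rightarrow> real) \<Rightarrow> 'a set \<Rightarrow> ('a \<Rightarrow> ereal) \<Rightarrow> bool" where
  "strongly_convex_on N S w \<longleftrightarrow> (\<forall>x\<in>S. \<forall>y\<in>S. \<forall>t::real. 0 \<le> t \<longrightarrow> t \<le> 1 \<longrightarrow>
      w (t *\<^sub>R x + (1 - t) *\<^sub>R y) \<le>
        ereal t * w x + ereal (1 - t) * w y - ereal (t * (1 - t) / 2 * (N (x - y))\<^sup>2))"

definition conj :: "('a::real_inner \<Rightarrow> ereal) \<Rightarrow> 'a \<Rightarrow> ereal" where
  "conj F g = (SUP x. ereal (g \<bullet> x) - F x)"

definition is_argmin :: "('a \<Rightarrow> ereal) \<Rightarrow> 'a \<Rightarrow> bool" where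
  "is_argmin F x \<longleftrightarrow> (\<forall>x'. F x \<le> F x')"

end

theory Submission
  imports Defs
begin

text \<open>
  Both methods are driven by the same two optimality conditions. By Fenchel-Young, a minimizer
  of \<open>\<langle>s, u\<rangle> + h\<^sup>\<alpha>(u)\<close> is a subgradient, hence the gradient, of the differentiable
  conjugate \<open>(h\<^sup>\<alpha>)\<^sup>*\<close> at \<open>-s\<close>; so \<open>x\<^sub>k = \<nabla>(h\<^sup>\<alpha>)\<^sup>*(-s\<^sub>k)\<close>, which is \<open>v\<^sub>k\<close> as soon
  as \<open>s\<^sub>k = z\<^sub>k\<close>. Up to an additive constant, the GEM objective for \<open>g\<^sub>k\<^sub>+\<^sub>1\<close> is a positive
  multiple of \<open>f\<^sup>*(g) - \<langle>p, g\<rangle>\<close>, where \<open>p\<close> is the average of \<open>vh\<^sub>k\<close> and \<open>xt\<^sub>k\<close> with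
  weights \<open>a\<^sub>k\<close> and \<open>\<tau>\<^sub>k L/\<alpha>\<close>; hence \<open>g\<^sub>k\<^sub>+\<^sub>1 = \<nabla>f(p)\<close>. The GEM weights satisfy
  \<open>\<tau>\<^sub>k = (\<alpha>/L) A\<^sub>k\<close> and \<open>a\<^sub>k = \<lambda> A\<^sub>k\<^sub>+\<^sub>1\<close>, and under the invariant
  \<open>y\<^sub>k = xt\<^sub>k + \<lambda> (x\<^sub>k - v\<^sub>k\<^sub>-\<^sub>1)\<close> the point \<open>p\<close> is exactly \<open>xt\<^sub>k\<^sub>+\<^sub>1\<close>, which closes the
  induction.
\<close>

lemma subgradient_eq_gradient:
  fixes F :: "'a::real_inner \<Rightarrow> real"
  assumes deriv: "GDERIV F p :> G" and subgrad: "\<And>q. F p + (q - p) \<bullet> u \<le> F q"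
  shows "u = G"
proof -
  have "((\<lambda>q. F q - q \<bullet> u) has_derivative (\<lambda>d. d \<bullet> G - d \<bullet> u)) (at p)"
    using deriv unfolding gderiv_def by (auto intro!: derivative_eq_intros)
  moreover have "\<forall>q\<in>UNIV. F p - p \<bullet> u \<le> F q - q \<bullet> u"
    using subgrad by (auto simp: algebra_simps)
  ultimately have "(\<lambda>d. d \<bullet> G - d \<bullet> u) = (\<lambda>d. 0)"
    using differential_zero_maxmin[of p UNIV] by blast
  then have "(G - u) \<bullet> (G - u) = 0"
    by (metis inner_diff_right)
  then show ?thesis by simp
qed

lemma convex_on_gradient_inequality:
  fixes f :: "'a::real_inner \<Rightarrow> real"
  assumes convex: "convex_on UNIV f" and deriv: "GDERIV f x :> G"
  shows "f x + G \<bullet> (y - x) \<le> f y"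
proof -
  define \<phi> where "\<phi> t = f (x + t *\<^sub>R (y - x))" for t :: real
  have "convex_on UNIV \<phi>"
  proof (rule convex_onI)
    fix t u v :: real assume "0 < t" "t < 1"
    moreover have "x + ((1 - t) *\<^sub>R u + t *\<^sub>R v) *\<^sub>R (y - x)
        = (1 - t) *\<^sub>R (x + u *\<^sub>R (y - x)) + t *\<^sub>R (x + v *\<^sub>R (y - x))"
      by (simp add: algebra_simps)
    ultimately show "\<phi> ((1 - t) *\<^sub>R u + t *\<^sub>R v) \<le> (1 - t) * \<phi> u + t * \<phi> v"
      unfolding \<phi>_def using convex_onD[OF convex, of t] by auto
  qed auto
  moreover have "(\<phi> has_field_derivative (G \<bullet> (y - x))) (at 0)"
  proof -
    have "((\<lambda>t. x + t *\<^sub>R (y - x)) has_derivative (\<lambda>t. t *\<^sub>R (y - x))) (at 0)"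
      by (auto intro!: derivative_eq_intros)
    moreover have "(f has_derivative (\<lambda>d. d \<bullet> G)) (at (x + 0 *\<^sub>R (y - x)))"
      using deriv unfolding gderiv_def by simp
    ultimately have "(\<phi> has_derivative (\<lambda>t. (t *\<^sub>R (y - x)) \<bullet> G)) (at 0)"
      unfolding \<phi>_def by (rule has_derivative_compose[unfolded o_def])
    then show ?thesis
      unfolding has_field_derivative_def by (simp add: inner_commute mult_commute_abs)
  qed
  ultimately have "\<phi> 1 - \<phi> 0 \<ge> G \<bullet> (y - x) * (1 - 0)"
    by (intro convex_on_imp_above_tangent) auto
  then show ?thesis unfolding \<phi>_def by simp
qed

lemma fenchel_young: "ereal (q \<bullet> u) - H u \<le> conj H q"
  unfolding conj_def by (rule SUP_upper) simp

lemma conj_at_gradient: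
  fixes f :: "'a::real_inner \<Rightarrow> real"
  assumes "convex_on UNIV f" and "GDERIV f x :> G"
  shows "conj (\<lambda>u. ereal (f u)) G = ereal (G \<bullet> x - f x)"
proof (rule antisym)
  show "conj (\<lambda>u. ereal (f u)) G \<le> ereal (G \<bullet> x - f x)"
    unfolding conj_def
  proof (rule SUP_least)
    fix u
    have "f x + G \<bullet> (u - x) \<le> f u"
      using convex_on_gradient_inequality[OF assms] .
    then show "ereal (G \<bullet> u) - ereal (f u) \<le> ereal (G \<bullet> x - f x)"
      by (simp add: inner_diff_right)
  qed
  show "ereal (G \<bullet> x - f x) \<le> conj (\<lambda>u. ereal (f u)) G"
    using fenchel_young[of G x "\<lambda>u. ereal (f u)"] by simp
qed

lemma fenchel_young_eq_imp_gradient: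
  fixes f :: "'a::real_inner \<Rightarrow> real"
  assumes deriv: "GDERIV f x :> G" and eq: "conj (\<lambda>u. ereal (f u)) q \<le> ereal (q \<bullet> x - f x)"
  shows "q = G"
proof (rule subgradient_eq_gradient[OF deriv])
  fix u
  have "ereal (q \<bullet> u) - ereal (f u) \<le> ereal (q \<bullet> x - f x)"
    using fenchel_young eq by (rule order_trans)
  then show "f x + (u - x) \<bullet> q \<le> f u"
    by (simp add: inner_commute inner_diff_right)
qed

lemma argmin_eq_conj_gradient:
  fixes H :: "'a::real_inner \<Rightarrow> ereal"
  assumes H_gt: "\<And>u. H u > -\<infinity>" and bdd: "bounded (edom H)" and dom: "edom H \<noteq> {}"
    and argmin: "is_argmin (\<lambda>u. ereal (s \<bullet> u) + H u) x0"
    and deriv: "GDERIV (\<lambda>q. real_of_ereal (conj H q)) (- s) :> G"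
  shows "x0 = G"
proof -
  obtain B where B: "\<And>u. H u < \<infinity> \<Longrightarrow> norm u \<le> B"
    using bdd unfolding bounded_iff edom_def by auto
  obtain u0 where "H u0 < \<infinity>" using dom unfolding edom_def by auto
  moreover have min: "ereal (s \<bullet> x0) + H x0 \<le> ereal (s \<bullet> u) + H u" for u
    using argmin unfolding is_argmin_def by blast
  ultimately have "H x0 < \<infinity>"
    using min[of u0] by (cases "H x0"; cases "H u0") auto
  then obtain c where c: "H x0 = ereal c" using H_gt[of x0] by (cases "H x0") auto
  have lower: "ereal (p \<bullet> x0 - c) \<le> conj H p" for p
    using fenchel_young[of p x0 H] by (simp add: c)
  \<comment> \<open>minimality of x0 bounds H from below on its bounded domain\<close>
  have upper: "conj H p \<le> ereal (- s \<bullet> x0 - c + norm (p + s) * B)" for p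
    unfolding conj_def
  proof (rule SUP_least)
    fix u
    show "ereal (p \<bullet> u) - H u \<le> ereal (- s \<bullet> x0 - c + norm (p + s) * B)"
    proof (cases "H u")
      case (real d)
      have "(p + s) \<bullet> u \<le> norm (p + s) * B"
        using norm_cauchy_schwarz[of "p + s" u] B[of u] real
        by (simp add: order_trans mult_left_mono)
      moreover have "s \<bullet> x0 + c \<le> s \<bullet> u + d"
        using min[of u] c real by simp
      ultimately show ?thesis
        using real by (simp add: inner_add_left)
    qed (use H_gt in auto)
  qed
  have finite: "conj H p = ereal (real_of_ereal (conj H p))" for p
    using lower[of p] upper[of p] by (cases "conj H p") auto
  show ?thesis
  proof (rule subgradient_eq_gradient[OF deriv])
    fix p
    have "real_of_ereal (conj H (- s)) \<le> - s \<bullet> x0 - c"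
      using upper[of "- s"] by (subst (asm) finite) simp
    moreover have "p \<bullet> x0 - c \<le> real_of_ereal (conj H p)"
      using lower[of p] by (subst (asm) finite) simp
    ultimately show "real_of_ereal (conj H (- s)) + (p - - s) \<bullet> x0 \<le> real_of_ereal (conj H p)"
      by (simp add: inner_add_left)
  qed
qed

lemma edom_add_scaled_nonneg:
  assumes nonneg: "\<forall>u. w u \<ge> 0" and bdd: "\<exists>M. \<forall>u\<in>edom h. w u \<le> ereal M"
  shows "edom (\<lambda>u. h u + ereal c * w u) = edom h"
proof -
  have "h u + ereal c * w u < \<infinity> \<longleftrightarrow> h u < \<infinity>" for u
  proof (cases "h u = \<infinity>")
    case False
    then obtain M where "w u \<le> ereal M"
      using bdd unfolding edom_def by (auto simp: less_top[symmetric])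
    then obtain d where "w u = ereal d"
      using nonneg[rule_format, of u] by (cases "w u") auto
    then show ?thesis using False by (cases "h u") auto
  qed simp
  then show ?thesis unfolding edom_def by auto
qed

lemma dual_prox_step_eq_gradient:
  fixes f :: "'a::real_inner \<Rightarrow> real"
  defines "fs \<equiv> conj (\<lambda>u. ereal (f u))"
  assumes convex: "convex_on UNIV f" and grad: "\<And>u. GDERIV f u :> gf u"
    and a: "a \<ge> 0" and t: "t > 0" and L: "L > 0" and p: "fs p \<noteq> \<infinity>"
    and argmin: "is_argmin (\<lambda>q. ereal a * (ereal (- w \<bullet> q) + fs q)
        + ereal t * (ereal L * (fs q - fs p - ereal (x \<bullet> (q - p))))) q'"
  shows "q' = gf ((a / (a + t * L)) *\<^sub>R w + (t * L / (a + t * L)) *\<^sub>R x)"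
    (is "_ = gf ?xb")
proof -
  define c where "c = a + t * L"
  have c: "c > 0" unfolding c_def using a t L by (simp add: add_nonneg_pos)
  have fs_gt: "fs q > -\<infinity>" for q
    using fenchel_young[of q 0 "\<lambda>u. ereal (f u)"] unfolding fs_def by auto
  obtain C where C: "fs p = ereal C" using p fs_gt[of p] by (cases "fs p") auto
  define Obj where "Obj q = ereal a * (ereal (- w \<bullet> q) + fs q)
      + ereal t * (ereal L * (fs q - fs p - ereal (x \<bullet> (q - p))))" for q
  \<comment> \<open>up to a constant, the objective is c times fs q - ?xb \<bullet> q\<close>
  have xb: "c * (?xb \<bullet> q) = a * (w \<bullet> q) + t * L * (x \<bullet> q)" for q
    using c unfolding c_def[symmetric] by (simp add: inner_add_left field_simps)
  have Obj_finite: "Obj q = ereal (c * (r - ?xb \<bullet> q) + t * L * (x \<bullet> p - C))"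
    if "fs q = ereal r" for q r
    using that xb[of q] unfolding Obj_def c_def
    by (simp add: C inner_diff_right algebra_simps)
  have Obj_infinite: "Obj q = \<infinity>" if "fs q = \<infinity>" for q
    using that a t L unfolding Obj_def by (simp add: C)
  define q0 where "q0 = gf ?xb"
  have q0: "fs q0 = ereal (q0 \<bullet> ?xb - f ?xb)"
    unfolding fs_def q0_def using conj_at_gradient[OF convex grad] .
  have le: "Obj q' \<le> Obj q0" using argmin unfolding is_argmin_def Obj_def by blast
  then obtain r where r: "fs q' = ereal r"
    using fs_gt[of q'] Obj_infinite[of q'] Obj_finite[OF q0] by (cases "fs q'") auto
  have "c * (r - ?xb \<bullet> q') \<le> c * (- f ?xb)"
    using le Obj_finite[OF r] Obj_finite[OF q0] by (simp add: inner_commute)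
  then have "r - ?xb \<bullet> q' \<le> - f ?xb"
    using c by (simp only: mult_le_cancel_left_pos)
  then have "fs q' \<le> ereal (q' \<bullet> ?xb - f ?xb)"
    using r by (simp add: inner_commute)
  then show ?thesis
    using fenchel_young_eq_imp_gradient[OF grad] unfolding fs_def by blast
qed

lemma step_size_rescale:
  assumes "L > 0"
  shows "2 * \<alpha> / (\<alpha> + sqrt (\<alpha>\<^sup>2 + 4 * L * \<alpha>))
    = 2 * (\<alpha> / L) / (\<alpha> / L + sqrt ((\<alpha> / L)\<^sup>2 + 4 * (\<alpha> / L)))"
proof -
  define r where "r = \<alpha> / L"
  have \<alpha>: "\<alpha> = L * r" using assms by (simp add: r_def)
  have "\<alpha>\<^sup>2 + 4 * L * \<alpha> = L\<^sup>2 * (r\<^sup>2 + 4 * r)"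
    unfolding \<alpha> by (simp add: power2_eq_square algebra_simps)
  then have "sqrt (\<alpha>\<^sup>2 + 4 * L * \<alpha>) = L * sqrt (r\<^sup>2 + 4 * r)"
    using assms by (simp add: real_sqrt_mult)
  then show ?thesis
    using assms unfolding r_def[symmetric] by (simp add: \<alpha> distrib_left[symmetric])
qed

lemma gem_weights:
  fixes \<tau> A a :: "nat \<Rightarrow> real" and r :: real
  assumes r: "r > 0" and A0: "A 0 > 0" and \<tau>0: "\<tau> 0 = r * A 0"
    and a: "\<And>k. a k = (\<tau> k + sqrt ((\<tau> k)\<^sup>2 + 4 * \<tau> k * A k)) / 2"
    and \<tau>_Suc: "\<And>k. \<tau> (Suc k) = \<tau> k + r * a k"
    and A_Suc: "\<And>k. A (Suc k) = A k + a k"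
  shows "A k > 0 \<and> \<tau> k = r * A k \<and> a k = 2 * r / (r + sqrt (r\<^sup>2 + 4 * r)) * A (Suc k)"
proof -
  define S where "S = sqrt (r\<^sup>2 + 4 * r)"
  define \<rho> where "\<rho> = (r + S) / 2"
  have S: "S \<ge> 0" "S\<^sup>2 = r\<^sup>2 + 4 * r"
    unfolding S_def using r by simp_all
  have \<rho>: "\<rho> > 0" "\<rho>\<^sup>2 = r * (1 + \<rho>)"
    unfolding \<rho>_def using r S by (auto simp: power2_eq_square field_simps)
  have a_eq: "a k = \<rho> * A k" if "A k > 0" "\<tau> k = r * A k" for k
  proof -
    have "(\<tau> k)\<^sup>2 + 4 * \<tau> k * A k = (A k)\<^sup>2 * (r\<^sup>2 + 4 * r)"
      using that by (simp add: power2_eq_square algebra_simps)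
    then have "sqrt ((\<tau> k)\<^sup>2 + 4 * \<tau> k * A k) = A k * S"
      unfolding S_def using that by (simp add: real_sqrt_mult)
    then show ?thesis
      using a[of k] that unfolding \<rho>_def by (simp add: field_simps)
  qed
  have inv: "A k > 0 \<and> \<tau> k = r * A k" for k
  proof (induction k)
    case 0
    then show ?case using A0 \<tau>0 by simp
  next
    case (Suc k)
    then show ?case
      using a_eq[of k] \<tau>_Suc[of k] A_Suc[of k] \<rho> by (auto simp: algebra_simps add_pos_pos)
  qed
  have "2 * r / (r + S) * (1 + \<rho>) = \<rho>"
    using r S \<rho> unfolding \<rho>_def by (simp add: power2_eq_square field_simps)
  then show ?thesis
    using inv[of k] a_eq[of k] A_Suc[of k] unfolding S_def[symmetric]
    by (metis distrib_left mult.commute mult.left_commute mult_1_right)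
qed

text \<open>
  TAA and GEM with an arbitrary map \<open>mirror\<close> in place of \<open>\<nabla>(h\<^sup>\<alpha>)\<^sup>*\<close> and arbitrary
  positive weights with \<open>a\<^sub>k = \<lambda> A\<^sub>k\<^sub>+\<^sub>1\<close>; \<open>t\<^sub>k\<close> stands for \<open>\<tau>\<^sub>k/\<alpha>\<close>.
\<close>
locale taa_gem_coupling =
  fixes f :: "'a::real_inner \<Rightarrow> real" and gf mirror :: "'a \<Rightarrow> 'a" and lam L :: real
    and xt s x y g z vh :: "nat \<Rightarrow> 'a" and v :: "int \<Rightarrow> 'a"
    and A t :: "nat \<Rightarrow> real" and a :: "int \<Rightarrow> real"
  assumes f_convex: "convex_on UNIV f" and f_grad: "\<And>u. GDERIV f u :> gf u"
    and L_pos: "L > 0" and lam_pos: "lam > 0" and A_pos: "\<And>k. A k > 0"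
    and A_Suc: "\<And>k. A (Suc k) = A k + a (int k)"
    and a_eq: "\<And>k. a (int k) = lam * A (Suc k)"
    and t_eq: "\<And>k. t k * L = A k"
    and x_eq: "\<And>k. x k = mirror (- s k)"
    and taa_s0: "s 0 = gf (y 0)" and taa_xt0: "xt 0 = y 0"
    and taa_xt: "\<And>k. xt (Suc k) = (1 - lam) *\<^sub>R y k + lam *\<^sub>R x k"
    and taa_s: "\<And>k. s (Suc k) = (1 - lam) *\<^sub>R s k + lam *\<^sub>R gf (xt (Suc k))"
    and taa_y: "\<And>k. y (Suc k) = (1 - lam) *\<^sub>R y k + lam *\<^sub>R x (Suc k)"
    and gem_g0: "g 0 = gf (y 0)" and gem_z0: "z 0 = gf (y 0)"
    and gem_v0: "v 0 = mirror (- g 0)" and gem_vm1: "v (-1) = v 0"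
    and gem_vh: "\<And>k. vh k = v (int k) + (a (int k - 1) / a (int k)) *\<^sub>R (v (int k) - v (int k - 1))"
    and gem_g: "\<And>k. is_argmin
        (\<lambda>q. ereal (a (int k)) * (ereal (- vh k \<bullet> q) + conj (\<lambda>u. ereal (f u)) q)
             + ereal (t k) * (ereal L * (conj (\<lambda>u. ereal (f u)) q
                 - conj (\<lambda>u. ereal (f u)) (g k) - ereal (xt k \<bullet> (q - g k)))))
        (g (Suc k))"
    and gem_z: "\<And>k. z (Suc k) = (A k / A (Suc k)) *\<^sub>R z k + (a (int k) / A (Suc k)) *\<^sub>R g (Suc k)"
    and gem_v: "\<And>k. v (int (Suc k)) = mirror (- z (Suc k))"
begin

lemma a_pos: "a (int k) > 0"
  using a_eq lam_pos A_pos by simp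

lemma A_eq: "A k = (1 - lam) * A (Suc k)"
  using A_Suc[of k] a_eq[of k] unfolding left_diff_distrib by linarith

lemma weights_div_A_Suc: "A k / A (Suc k) = 1 - lam" "a (int k) / A (Suc k) = lam"
  using A_pos[of "Suc k"] unfolding A_eq[of k] a_eq[of k] by simp_all

lemma x_eq_v_if_s_eq_z: "s k = z k \<Longrightarrow> x k = v (int k)"
  using x_eq[of k] gem_v0 gem_g0 gem_z0 gem_v by (cases k) auto

lemma extrapolation_weight:
  "a (int k - 1) *\<^sub>R (v (int k) - v (int k - 1)) = (lam * A k) *\<^sub>R (v (int k) - v (int k - 1))"
proof (cases k)
  case 0
  then show ?thesis using gem_vm1 by simp
next
  case (Suc j)
  then show ?thesis using a_eq[of j] by simp
qed

lemma xt_Suc_eq_average: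
  assumes y: "y k = xt k + lam *\<^sub>R (x k - v (int k - 1))" and x: "x k = v (int k)"
  shows "xt (Suc k) = (a (int k) / (a (int k) + t k * L)) *\<^sub>R vh k
      + (t k * L / (a (int k) + t k * L)) *\<^sub>R xt k"
proof -
  have A_lam: "A (Suc k) * (1 - lam) = A k" "A (Suc k) * lam = a (int k)"
    unfolding A_eq[of k] a_eq[of k] by simp_all
  have vh: "a (int k) *\<^sub>R vh k = a (int k) *\<^sub>R v (int k) + (lam * A k) *\<^sub>R (v (int k) - v (int k - 1))"
    using gem_vh[of k] a_pos[of k] extrapolation_weight[of k] by (simp add: scaleR_right_distrib)
  have "A (Suc k) *\<^sub>R xt (Suc k) = (A (Suc k) * (1 - lam)) *\<^sub>R y k + (A (Suc k) * lam) *\<^sub>R x k"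
    using taa_xt[of k] by (simp add: scaleR_right_distrib)
  also have "\<dots> = A k *\<^sub>R (xt k + lam *\<^sub>R (v (int k) - v (int k - 1))) + a (int k) *\<^sub>R v (int k)"
    unfolding A_lam y x ..
  also have "\<dots> = a (int k) *\<^sub>R vh k + A k *\<^sub>R xt k"
    unfolding vh by (simp add: algebra_simps)
  finally have "(1 / A (Suc k)) *\<^sub>R (A (Suc k) *\<^sub>R xt (Suc k))
      = (a (int k) / A (Suc k)) *\<^sub>R vh k + (A k / A (Suc k)) *\<^sub>R xt k"
    by (simp add: scaleR_right_distrib)
  then show ?thesis
    using A_pos[of "Suc k"] A_Suc[of k] t_eq[of k] by (simp add: add.commute)
qed

lemma coupling_invariant:
  "gf (xt k) = g k \<and> s k = z k \<and> y k = xt k + lam *\<^sub>R (x k - v (int k - 1))"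
proof (induction k)
  case 0
  then show ?case using taa_s0 taa_xt0 gem_g0 gem_z0 gem_vm1 x_eq_v_if_s_eq_z[of 0] by simp
next
  case (Suc k)
  then have g: "g k = gf (xt k)" and sz: "s k = z k"
    and y: "y k = xt k + lam *\<^sub>R (x k - v (int k - 1))" by auto
  have x: "x k = v (int k)" using x_eq_v_if_s_eq_z[OF sz] .
  have t: "t k > 0"
    using t_eq[of k] A_pos[of k] L_pos by (metis zero_less_mult_pos2)
  have "conj (\<lambda>u. ereal (f u)) (g k) \<noteq> \<infinity>"
    unfolding g using conj_at_gradient[OF f_convex f_grad] by simp
  then have gS: "g (Suc k) = gf (xt (Suc k))"
    unfolding xt_Suc_eq_average[OF y x]
    using dual_prox_step_eq_gradient[OF f_convex f_grad _ t L_pos _ gem_g[of k]] a_pos[of k]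
    by simp
  have "s (Suc k) = z (Suc k)"
    using taa_s[of k] gem_z[of k] weights_div_A_Suc[of k] sz gS by simp
  moreover have "y (Suc k) = xt (Suc k) + lam *\<^sub>R (x (Suc k) - v (int (Suc k) - 1))"
    unfolding taa_y taa_xt x by (simp add: algebra_simps)
  ultimately show ?case using gS by simp
qed

theorem taa_eq_gem: "gf (xt k) = g k \<and> s k = z k \<and> x k = v (int k)"
  using coupling_invariant x_eq_v_if_s_eq_z by blast

end

theorem proposition5p3:
  fixes N :: "'a::euclidean_space \<Rightarrow> real"
    and f :: "'a \<Rightarrow> real" and gf :: "'a \<Rightarrow> 'a"
    and h w :: "'a \<Rightarrow> ereal"
    and L \<alpha> :: real
    and gc :: "'a \<Rightarrow> 'a"
    and xt s x y :: "nat \<Rightarrow> 'a"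
    and g z vh :: "nat \<Rightarrow> 'a" and v :: "int \<Rightarrow> 'a"
    and \<tau> A :: "nat \<Rightarrow> real" and a :: "int \<Rightarrow> real"
  defines "h\<alpha> \<equiv> (\<lambda>u. h u + ereal \<alpha> * w u)"
    and "lam \<equiv> 2 * \<alpha> / (\<alpha> + sqrt (\<alpha>\<^sup>2 + 4 * L * \<alpha>))"
    and "fs \<equiv> conj (\<lambda>u. ereal (f u))"
  assumes norm: "is_norm N"
    and L_pos: "L > 0"
    and f_convex: "convex_on UNIV f"
    and f_grad: "\<forall>u. GDERIV f u :> gf u"
    and f_smooth: "L_smooth N L f"
    and h_closed: "closed_fun h" and h_proper: "proper_fun h" and h_convex: "convex_fun h"
    and h_bdd: "bounded (edom h)"
    and w_nonneg: "\<forall>u. w u \<ge> 0"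
    and w_closed: "closed_fun w"
    and w_sc: "strongly_convex_on N (edom h) w"
    and w_max: "\<exists>M::real. \<forall>u\<in>edom h. w u \<le> ereal M"
    and conj_grad: "\<forall>q. GDERIV (\<lambda>q'. real_of_ereal (conj h\<alpha> q')) q :> gc q"
    and \<alpha>_pos: "\<alpha> > 0"
    and y0_dom: "y 0 \<in> edom h"
    \<comment> \<open>TAA\<close>
    and taa_s0: "s 0 = gf (y 0)"
    and taa_xt0: "xt 0 = y 0"
    and taa_x0: "is_argmin (\<lambda>u. ereal (s 0 \<bullet> u) + h\<alpha> u) (x 0)"
    and taa_xt: "\<forall>k. xt (Suc k) = (1 - lam) *\<^sub>R y k + lam *\<^sub>R x k"
    and taa_s: "\<forall>k. s (Suc k) = (1 - lam) *\<^sub>R s k + lam *\<^sub>R gf (xt (Suc k))"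
    and taa_x: "\<forall>k. is_argmin (\<lambda>u. ereal (s (Suc k) \<bullet> u) + h\<alpha> u) (x (Suc k))"
    and taa_y: "\<forall>k. y (Suc k) = (1 - lam) *\<^sub>R y k + lam *\<^sub>R x (Suc k)"
    \<comment> \<open>GEM with \<nu>* = L f*\<close>
    and gem_g0: "g 0 = gf (y 0)" and gem_z0: "z 0 = gf (y 0)"
    and gem_v0: "v 0 = gc (- g 0)" and gem_vm1: "v (-1) = v 0"
    and gem_\<tau>0: "\<tau> 0 = \<alpha> / L" and gem_A0: "A 0 = 1" and gem_am1: "a (-1) = 0"
    and gem_a: "\<forall>k. a (int k) = (\<tau> k + sqrt ((\<tau> k)\<^sup>2 + 4 * \<tau> k * A k)) / 2"
    and gem_\<tau>: "\<forall>k. \<tau> (Suc k) = \<tau> k + \<alpha> * a (int k) / L"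
    and gem_A: "\<forall>k. A (Suc k) = A k + a (int k)"
    and gem_vh: "\<forall>k. vh k = v (int k) + (a (int k - 1) / a (int k)) *\<^sub>R (v (int k) - v (int k - 1))"
    and gem_g: "\<forall>k. is_argmin
        (\<lambda>q. ereal (a (int k)) * (ereal (- vh k \<bullet> q) + fs q)
             + ereal (\<tau> k / \<alpha>) *
                 (ereal L * (fs q - fs (g k) - ereal (xt k \<bullet> (q - g k)))))
        (g (Suc k))"
    and gem_z: "\<forall>k. z (Suc k) = (A k / A (Suc k)) *\<^sub>R z k + (a (int k) / A (Suc k)) *\<^sub>R g (Suc k)"
    and gem_v: "\<forall>k. v (int (Suc k)) = gc (- z (Suc k))"
  shows "\<forall>k. gf (xt k) = g k \<and> s k = z k \<and> x k = v (int k)"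
proof -
  have lam: "lam = 2 * (\<alpha> / L) / (\<alpha> / L + sqrt ((\<alpha> / L)\<^sup>2 + 4 * (\<alpha> / L)))"
    unfolding lam_def using L_pos by (rule step_size_rescale)
  have "A k > 0 \<and> \<tau> k = \<alpha> / L * A k \<and> a (int k) = lam * A (Suc k)" for k
    unfolding lam using \<alpha>_pos L_pos gem_A0 gem_\<tau>0 gem_a gem_\<tau> gem_A
    by (intro gem_weights[of "\<alpha> / L" A \<tau> "\<lambda>k. a (int k)"]) auto
  then have weights: "A k > 0" "\<tau> k / \<alpha> * L = A k" "a (int k) = lam * A (Suc k)" for k
    using \<alpha>_pos L_pos by auto
  have lam_pos: "lam > 0"
    unfolding lam using \<alpha>_pos L_pos by (simp add: add_pos_nonneg)
  have h\<alpha>_gt: "h\<alpha> u > -\<infinity>" for u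
    using h_proper w_nonneg[rule_format, of u] \<alpha>_pos unfolding h\<alpha>_def proper_fun_def
    by (cases "h u"; cases "w u") auto
  have "is_argmin (\<lambda>u. ereal (s k \<bullet> u) + h\<alpha> u) (x k)" for k
    using taa_x0 taa_x by (cases k) auto
  moreover have "edom h\<alpha> = edom h"
    unfolding h\<alpha>_def by (rule edom_add_scaled_nonneg[OF w_nonneg w_max])
  ultimately have "x k = gc (- s k)" for k
    using h_bdd y0_dom by (intro argmin_eq_conj_gradient[OF h\<alpha>_gt _ _ _ conj_grad[rule_format]]) auto
  then interpret taa_gem_coupling f gf gc lam L xt s x y g z vh v A "\<lambda>k. \<tau> k / \<alpha>" a
    using f_convex f_grad L_pos lam_pos weights taa_s0 taa_xt0 taa_xt taa_s taa_y gem_g0 gem_z0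
      gem_v0 gem_vm1 gem_vh gem_g gem_A gem_z gem_v
    by unfold_locales (auto simp: fs_def)
  show ?thesis using taa_eq_gem by blast
qed

end
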